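(* Fix measurable $\pi_0,\pi_1:\mathcal X\to\{0,1\}$ and set $\tau(X)=\mu(X,1)-\mu(X,0)$, $$\mathrm{FNA}^-_{\pi_0\to\pi_1}=E_P\big[\max\{(\pi_0(X)-\pi_1(X))\tau(X),\,0\}\big],$$ $$\mathrm{FNA}^+_{\pi_0\to\pi_1}=E_P\Big[\min\big\{\pi_1(X)(1-\pi_0(X))\mu(X,0)+\pi_0(X)(1-\pi_1(X))(1-\mu(X,0)),\ \pi_1(X)(1-\pi_0(X))(1-\mu(X,1))+\pi_0(X)(1-\pi_1(X))\mu(X,1)\big\}\Big].$$ Then the identified set is exactly the closed interval $\mathcal S(\mathrm{FNA}_{\pi_0\to\pi_1};P)=[\mathrm{FNA}^-_{\pi_0\to\pi_1},\,\mathrm{FNA}^+_{\pi_0\to\pi_1}]$. In particular, for the constant policies $\pi_0\equiv0,\pi_1\equiv1$, the identified set of $\mathrm{FNA}=\mathbb P(Y(0)=1,Y(1)=0)$ is $[-E_P[\min\{\tau(X),0\}],\ E_P[\min\{\mu(X,0),1-\mu(X,1)\}]]$.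
   Context: Let $\mathcal X$ be a measurable covariate space. A full (unobservable) distribution $\mathbb P$ is a law of $(X,A,Y(0),Y(1))$ with $X\in\mathcal X$, $A\in\{0,1\}$, $Y(0),Y(1)\in\{0,1\}$. The coarsening map $\mathcal C(x,a,y_0,y_1)=(x,a,ay_1+(1-a)y_0)$ induces the observed-data distribution $P=\mathbb P\circ\mathcal C^{-1}$ of $(X,A,Y)$, where $Y=Y(A)$. Write $e(X)=P(A=1\mid X)$ and assume overlap: $e(X)\in(0,1)$ a.s. Let $\mu(X,a)=E_P[Y\mid X,A=a]$. For policies $\pi_0,\pi_1:\mathcal X\to\{0,1\}$, define $\mathrm{FNA}_{\pi_0\to\pi_1}(\mathbb P)=\mathbb P\big(Y(\pi_0(X))=1,\,Y(\pi_1(X))=0\big)$. For a parameter $\psi(\mathbb P)$ its identified set is $\mathcal S(\psi;P)=\{\psi(\mathbb P):\ \mathbb P\circ\mathcal C^{-1}=P,\ \mathbb P(A=1\mid X)=\mathbb P(A=1\mid X,Y(a))\text{ for }a=0,1\}$ (the last condition is unconfoundedness). *)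

theory Defs
  imports "HOL-Probability.Probability"
begin

text \<open>Full (unobservable) data: (X, A, Y(0), Y(1)); observed data: (X, A, Y).
  Binary variables are encoded as bool (True = 1).\<close>

type_synonym 'x full = "'x \<times> bool \<times> bool \<times> bool"
type_synonym 'x obs = "'x \<times> bool \<times> bool"

definition full_space :: "'x measure \<Rightarrow> 'x full measure" where
  "full_space M = M \<Otimes>\<^sub>M (count_space UNIV \<Otimes>\<^sub>M (count_space UNIV \<Otimes>\<^sub>M count_space UNIV))"

definition obs_space :: "'x measure \<Rightarrow> 'x obs measure" where
  "obs_space M = M \<Otimes>\<^sub>M (count_space UNIV \<Otimes>\<^sub>M count_space UNIV)"

definition fX :: "'x full \<Rightarrow> 'x" where "fX w = fst w"
definition fA :: "'x full \<Rightarrow> bool" where "fA w = fst (snd w)"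
definition pot :: "'x full \<Rightarrow> bool \<Rightarrow> bool" where
  "pot w b = (if b then snd (snd (snd w)) else fst (snd (snd w)))"

definition oX :: "'x obs \<Rightarrow> 'x" where "oX w = fst w"
definition oA :: "'x obs \<Rightarrow> bool" where "oA w = fst (snd w)"
definition oY :: "'x obs \<Rightarrow> bool" where "oY w = snd (snd w)"

definition coarsen :: "'x full \<Rightarrow> 'x obs" where
  "coarsen w = (fX w, fA w, pot w (fA w))"

definition unconfounded :: "'x measure \<Rightarrow> 'x full measure \<Rightarrow> bool" where
  "unconfounded M F \<longleftrightarrow> (\<forall>b::bool. AE w in F.
     real_cond_exp F (vimage_algebra (space F) fX M) (\<lambda>w. of_bool (fA w)) w
   = real_cond_exp F (vimage_algebra (space F) (\<lambda>w. (fX w, pot w b)) (M \<Otimes>\<^sub>M count_space UNIV))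
       (\<lambda>w. of_bool (fA w)) w)"

definition identified_set ::
  "'x measure \<Rightarrow> 'x obs measure \<Rightarrow> ('x full measure \<Rightarrow> real) \<Rightarrow> real set" where
  "identified_set M P \<psi> = {\<psi> F | F. prob_space F \<and> sets F = sets (full_space M)
      \<and> distr F (obs_space M) coarsen = P \<and> unconfounded M F}"

definition FNA :: "('x \<Rightarrow> bool) \<Rightarrow> ('x \<Rightarrow> bool) \<Rightarrow> 'x full measure \<Rightarrow> real" where
  "FNA \<pi>0 \<pi>1 F = measure F {w \<in> space F. pot w (\<pi>0 (fX w)) \<and> \<not> pot w (\<pi>1 (fX w))}"

end

theory Submission
  imports Defs
begin

text \<open>Unconfoundedness and overlap pin down the marginal laws of the potential outcomes given \<open>X\<close>:
  for every full law compatible with \<open>P\<close>, \<open>P(Y(a) = 1 | X) = \<mu>(X, a)\<close> almost surely, since \<open>A\<close> is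
  independent of \<open>Y(a)\<close> given \<open>X\<close> and both arms have positive probability. The FNA is the mass of one
  cell of the coupling of \<open>Y(\<pi>\<^sub>0 X)\<close> and \<open>Y(\<pi>\<^sub>1 X)\<close>, which is not identified. The Fr\'echet
  inequalities \<open>max (y\<^sub>0 - y\<^sub>1) 0 \<le> [y\<^sub>0 = 1, y\<^sub>1 = 0] \<le> min y\<^sub>0 (1 - y\<^sub>1)\<close>, used with the
  affine piece that is active at the regressions, give integrands that are affine in \<open>Y(0), Y(1)\<close>, so
  their expectations are identified and bound the FNA. Conversely, every point of the interval is the
  FNA of the law that draws \<open>A\<close> from the propensity and, independently of \<open>A\<close>, \<open>(Y(0), Y(1))\<close> from
  a coupling interpolating between the two Fr\'echet extremes.\<close>

lemma pair_count_space_UNIV: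
  "count_space (UNIV::'a::countable set) \<Otimes>\<^sub>M count_space (UNIV::'b::countable set) = count_space UNIV"
  by (simp add: pair_measure_countable)

lemma full_space_eq: "full_space M = M \<Otimes>\<^sub>M count_space UNIV"
  unfolding full_space_def by (simp add: pair_count_space_UNIV)

lemma obs_space_eq: "obs_space M = M \<Otimes>\<^sub>M count_space UNIV"
  unfolding obs_space_def by (simp add: pair_count_space_UNIV)

lemma sum_UNIV_bool_pair:
  "(\<Sum>t\<in>UNIV. f t) = f (False, False) + f (False, True) + f (True, False) + f (True, True)"
proof -
  have U: "(UNIV::(bool \<times> bool) set) = {(False, False), (False, True), (True, False), (True, True)}"
    by auto
  show ?thesis by (subst U) (simp add: add.assoc)
qed

lemma sum_UNIV_bool_triple:
  "(\<Sum>t\<in>UNIV. f t) =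
     f (False, False, False) + f (False, False, True) + f (False, True, False) + f (False, True, True) +
     f (True, False, False) + f (True, False, True) + f (True, True, False) + f (True, True, True)"
proof -
  have U: "(UNIV::(bool \<times> bool \<times> bool) set) = {(False, False, False), (False, False, True),
      (False, True, False), (False, True, True), (True, False, False), (True, False, True),
      (True, True, False), (True, True, True)}"
    by auto
  show ?thesis by (subst U) (simp add: add.assoc)
qed

lemma abs_mult_le_of_unit_interval:
  fixes a q :: real
  assumes "\<bar>a\<bar> \<le> c" "0 \<le> q" "q \<le> 1"
  shows "\<bar>a * q\<bar> \<le> c"
proof -
  have "\<bar>a * q\<bar> \<le> \<bar>a\<bar>"
    using assms(2,3) by (simp add: abs_mult mult_left_le)
  then show ?thesis
    using assms(1) by linarith
qed

lemma (in finite_measure) integrable_real_bounded: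
  fixes f :: "'a \<Rightarrow> real"
  assumes "f \<in> borel_measurable M" "\<And>x. \<bar>f x\<bar> \<le> c"
  shows "integrable M f"
  using integrable_const_bound[of f c] assms by auto

section \<open>Conditional expectation given a random variable\<close>

lemma finite_measure_subalgebra_vimage_algebra:
  assumes "finite_measure N" "\<phi> \<in> N \<rightarrow>\<^sub>M K"
  shows "finite_measure_subalgebra N (vimage_algebra (space N) \<phi> K)"
  unfolding finite_measure_subalgebra_def finite_measure_subalgebra_axioms_def subalgebra_def
  using sets_image_in_sets[OF _ assms(2)] assms(1) by auto

lemma measurable_vimage_algebra_compose:
  assumes "\<phi> \<in> N \<rightarrow>\<^sub>M K" "g \<in> K \<rightarrow>\<^sub>M L"
  shows "(\<lambda>w. g (\<phi> w)) \<in> vimage_algebra (space N) \<phi> K \<rightarrow>\<^sub>M L"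
  using assms by (intro measurable_compose[OF measurable_vimage_algebra1]) (auto dest: measurable_space)

lemma integral_mult_real_cond_exp_vimage:
  fixes f :: "'a \<Rightarrow> real" and g h :: "'b \<Rightarrow> real"
  assumes N: "finite_measure N" and \<phi>: "\<phi> \<in> N \<rightarrow>\<^sub>M K" and f: "integrable N f"
    and h: "h \<in> borel_measurable K" and g: "g \<in> borel_measurable K" "\<And>y. \<bar>g y\<bar> \<le> c"
    and ce: "AE w in N. real_cond_exp N (vimage_algebra (space N) \<phi> K) f w = h (\<phi> w)"
  shows "(\<integral>w. g (\<phi> w) * f w \<partial>N) = (\<integral>w. g (\<phi> w) * h (\<phi> w) \<partial>N)"
proof -
  interpret finite_measure_subalgebra N "vimage_algebra (space N) \<phi> K"
    by (rule finite_measure_subalgebra_vimage_algebra[OF N \<phi>])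
  have g\<phi>: "(\<lambda>w. g (\<phi> w)) \<in> borel_measurable (vimage_algebra (space N) \<phi> K)"
    by (rule measurable_vimage_algebra_compose[OF \<phi> g(1)])
  have "integrable N (\<lambda>w. g (\<phi> w) * f w)"
  proof (rule Bochner_Integration.integrable_bound[OF Bochner_Integration.integrable_mult_right[OF f, of c]])
    show "(\<lambda>w. g (\<phi> w) * f w) \<in> borel_measurable N"
      using \<phi> g(1) f by measurable
    have "0 \<le> c" using g(2) abs_ge_zero order_trans by blast
    then show "AE w in N. norm (g (\<phi> w) * f w) \<le> norm (c * f w)"
      using g(2) by (auto simp: abs_mult intro!: mult_right_mono)
  qed
  then have "(\<integral>w. g (\<phi> w) * f w \<partial>N) = (\<integral>w. g (\<phi> w) * real_cond_exp N (vimage_algebra (space N) \<phi> K) f w \<partial>N)"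
    using g\<phi> f by (intro real_cond_exp_intg(2)[symmetric]) auto
  also have "\<dots> = (\<integral>w. g (\<phi> w) * h (\<phi> w) \<partial>N)"
    using ce \<phi> g(1) h by (intro integral_cong_AE) (auto intro: borel_measurable_cond_exp2)
  finally show ?thesis .
qed

lemma real_cond_exp_vimage_eqI:
  fixes f :: "'a \<Rightarrow> real" and h :: "'b \<Rightarrow> real"
  assumes N: "finite_measure N" and \<phi>: "\<phi> \<in> N \<rightarrow>\<^sub>M K"
    and f: "integrable N f" and h: "h \<in> borel_measurable K" "integrable N (\<lambda>w. h (\<phi> w))"
    and eq: "\<And>C. C \<in> sets K \<Longrightarrow>
      (\<integral>w. indicator C (\<phi> w) * f w \<partial>N) = (\<integral>w. indicator C (\<phi> w) * h (\<phi> w) \<partial>N)"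
  shows "AE w in N. real_cond_exp N (vimage_algebra (space N) \<phi> K) f w = h (\<phi> w)"
proof -
  interpret finite_measure_subalgebra N "vimage_algebra (space N) \<phi> K"
    by (rule finite_measure_subalgebra_vimage_algebra[OF N \<phi>])
  have \<phi>_space: "\<phi> \<in> space N \<rightarrow> space K"
    using measurable_space[OF \<phi>] by auto
  show ?thesis
  proof (rule real_cond_exp_charact)
    fix A assume "A \<in> sets (vimage_algebra (space N) \<phi> K)"
    then obtain C where C: "C \<in> sets K" and A: "A = \<phi> -` C \<inter> space N"
      unfolding sets_vimage_algebra2[OF \<phi>_space] by auto
    have "(\<integral>w\<in>A. u w \<partial>N) = (\<integral>w. indicator C (\<phi> w) * u w \<partial>N)" for u :: "'a \<Rightarrow> real"
      unfolding set_lebesgue_integral_def A by (intro Bochner_Integration.integral_cong) (auto split: split_indicator)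
    then show "(\<integral>w\<in>A. f w \<partial>N) = (\<integral>w\<in>A. h (\<phi> w) \<partial>N)"
      using eq[OF C] by simp
  qed (use f h measurable_vimage_algebra_compose[OF \<phi> h(1)] in auto)
qed

lemma (in finite_measure_subalgebra) real_cond_exp_of_bool_eq:
  assumes [measurable]: "Measurable.pred M Q"
    and ce: "AE w in M. real_cond_exp M F (\<lambda>w. of_bool (Q w)) w = r w"
  shows "AE w in M. real_cond_exp M F (\<lambda>w. of_bool (Q w = b)) w = (if b then r w else 1 - r w)"
proof (cases b)
  case False
  have int: "integrable M (\<lambda>w. of_bool (Q w) :: real)"
    by (rule integrable_real_bounded[where c=1]) auto
  have "AE w in M. real_cond_exp M F (\<lambda>w. 1 - of_bool (Q w)) w
      = real_cond_exp M F (\<lambda>w. 1) w - real_cond_exp M F (\<lambda>w. of_bool (Q w)) w"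
    using int by (intro real_cond_exp_diff) auto
  moreover have "AE w in M. real_cond_exp M F (\<lambda>w. 1) w = (1::real)"
    by (intro real_cond_exp_F_meas) auto
  ultimately show ?thesis
    using ce unfolding False by eventually_elim (simp add: of_bool_not_iff)
qed (use ce in simp)

lemma oX_measurable [measurable]: "oX \<in> M \<Otimes>\<^sub>M N \<rightarrow>\<^sub>M M"
  unfolding oX_def by simp

lemma oA_measurable [measurable]: "Measurable.pred (M \<Otimes>\<^sub>M count_space UNIV) oA"
  unfolding oA_def by (rule measurable_compose[OF measurable_snd]) simp

lemma oY_measurable [measurable]: "Measurable.pred (M \<Otimes>\<^sub>M count_space UNIV) oY"
  unfolding oY_def by (rule measurable_compose[OF measurable_snd]) simp

lemma oA_eq_measurable [measurable]: "Measurable.pred (M \<Otimes>\<^sub>M count_space UNIV) (\<lambda>w. oA w = a)"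
  by (cases a) simp_all

lemma oY_eq_measurable [measurable]: "Measurable.pred (M \<Otimes>\<^sub>M count_space UNIV) (\<lambda>w. oY w = y)"
  by (cases y) simp_all

lemma coarsen_simps [simp]: "oX (coarsen w) = fX w" "oA (coarsen w) = fA w" "oY (coarsen w) = pot w (fA w)"
  by (simp_all add: coarsen_def oX_def oA_def oY_def)

lemma fX_measurable [measurable]: "fX \<in> M \<Otimes>\<^sub>M N \<rightarrow>\<^sub>M M"
  unfolding fX_def by simp

lemma fA_measurable [measurable]: "Measurable.pred (M \<Otimes>\<^sub>M count_space UNIV) fA"
  unfolding fA_def by (rule measurable_compose[OF measurable_snd]) simp

lemma fA_eq_measurable [measurable]: "Measurable.pred (M \<Otimes>\<^sub>M count_space UNIV) (\<lambda>w. fA w = a)"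
  by (cases a) simp_all

lemma pot_measurable [measurable]: "Measurable.pred (M \<Otimes>\<^sub>M count_space UNIV) (\<lambda>w. pot w b)"
  unfolding pot_def by (rule measurable_compose[OF measurable_snd]) simp

lemma pot_policy_measurable [measurable]:
  assumes [measurable]: "\<pi> \<in> M \<rightarrow>\<^sub>M count_space UNIV"
  shows "Measurable.pred (M \<Otimes>\<^sub>M count_space UNIV) (\<lambda>w. pot w (\<pi> (fX w)))"
proof -
  have "(\<lambda>w. pot w (\<pi> (fX w))) = (\<lambda>w. if \<pi> (fX w) then pot w True else pot w False)"
    by (simp add: pot_def fun_eq_iff)
  then show ?thesis
    by simp
qed

lemma coarsen_measurable [measurable]: "coarsen \<in> M \<Otimes>\<^sub>M count_space UNIV \<rightarrow>\<^sub>M M \<Otimes>\<^sub>M count_space UNIV"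
proof -
  have "coarsen = (\<lambda>w. (fst w, (\<lambda>t. (fst t, if fst t then snd (snd t) else fst (snd t))) (snd w)))"
    by (auto simp: coarsen_def fX_def fA_def pot_def)
  also have "\<dots> \<in> M \<Otimes>\<^sub>M count_space UNIV \<rightarrow>\<^sub>M M \<Otimes>\<^sub>M count_space UNIV"
    by (intro measurable_Pair measurable_compose[OF measurable_snd]) simp_all
  finally show ?thesis .
qed

lemma FNA_eq_integral:
  assumes "finite_measure N" and [measurable]: "Measurable.pred N (\<lambda>w. pot w (\<pi>0 (fX w)) \<and> \<not> pot w (\<pi>1 (fX w)))"
  shows "FNA \<pi>0 \<pi>1 N = (\<integral>w. of_bool (pot w (\<pi>0 (fX w)) \<and> \<not> pot w (\<pi>1 (fX w))) \<partial>N)"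
proof -
  let ?S = "{w \<in> space N. pot w (\<pi>0 (fX w)) \<and> \<not> pot w (\<pi>1 (fX w))}"
  have "(\<integral>w. of_bool (pot w (\<pi>0 (fX w)) \<and> \<not> pot w (\<pi>1 (fX w))) \<partial>N) = (\<integral>w. indicator ?S w \<partial>N)"
    by (intro Bochner_Integration.integral_cong) (auto split: split_indicator)
  also have "\<dots> = measure N ?S"
    using finite_measure.emeasure_finite[OF assms(1)] by simp
  finally show ?thesis
    unfolding FNA_def ..
qed

section \<open>The observed law\<close>

definition clip01 :: "real \<Rightarrow> real" where
  "clip01 r = max 0 (min 1 r)"

lemma clip01_bounds [simp]: "0 \<le> clip01 r" "clip01 r \<le> 1"
  by (auto simp: clip01_def)

lemma clip01_eq: "0 \<le> r \<Longrightarrow> r \<le> 1 \<Longrightarrow> clip01 r = r"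
  by (auto simp: clip01_def)

lemma borel_measurable_clip01 [measurable]: "clip01 \<in> borel_measurable borel"
  unfolding clip01_def by measurable

locale obs_model =
  fixes M :: "'x measure" and P :: "'x obs measure"
    and e :: "'x \<Rightarrow> real" and \<mu> :: "'x \<Rightarrow> bool \<Rightarrow> real"
  assumes P_prob: "prob_space P"
    and P_sets: "sets P = sets (obs_space M)"
    and e_meas [measurable]: "e \<in> borel_measurable M"
    and e_version: "AE w in P. real_cond_exp P (vimage_algebra (space P) oX M)
                      (\<lambda>w. of_bool (oA w)) w = e (oX w)"
    and overlap: "AE w in P. 0 < e (oX w) \<and> e (oX w) < 1"
    and mu_meas: "(\<lambda>(x, a). \<mu> x a) \<in> borel_measurable (M \<Otimes>\<^sub>M count_space UNIV)"
    and mu_version: "AE w in P. real_cond_exp P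
                      (vimage_algebra (space P) (\<lambda>w. (oX w, oA w)) (M \<Otimes>\<^sub>M count_space UNIV))
                      (\<lambda>w. of_bool (oY w)) w = \<mu> (oX w) (oA w)"
begin

sublocale P: prob_space P by (rule P_prob)

lemma measurable_P: "measurable P = measurable (M \<Otimes>\<^sub>M count_space UNIV)"
  by (intro ext measurable_cong_sets) (simp_all add: P_sets obs_space_eq)

lemmas oX_measurable_P [measurable] = oX_measurable[of M "count_space UNIV", folded measurable_P]
lemmas oA_measurable_P [measurable] = oA_measurable[where M=M, folded measurable_P]
lemmas oY_measurable_P [measurable] = oY_measurable[where M=M, folded measurable_P]

lemma mu_measurable [measurable]: "(\<lambda>x. \<mu> x a) \<in> borel_measurable M"
  using measurable_compose[OF measurable_Pair[OF measurable_ident_sets measurable_const] mu_meas,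
      of M a]
  by simp

text \<open>The versions \<open>e\<close> and \<open>\<mu>\<close> are clipped to \<open>[0, 1]\<close>; this changes them only on
  \<open>P\<close>-null sets but makes every derived quantity bounded everywhere.\<close>

definition propensity :: "'x \<Rightarrow> bool \<Rightarrow> real" where
  "propensity x a = (if a then clip01 (e x) else 1 - clip01 (e x))"

definition outcome_mean :: "'x \<Rightarrow> bool \<Rightarrow> real" where
  "outcome_mean x a = clip01 (\<mu> x a)"

definition outcome_prob :: "'x \<Rightarrow> bool \<Rightarrow> bool \<Rightarrow> real" where
  "outcome_prob x a y = (if y then outcome_mean x a else 1 - outcome_mean x a)"

lemma propensity_bounds [simp]: "0 \<le> propensity x a" "propensity x a \<le> 1"
  by (auto simp: propensity_def)

lemma outcome_mean_bounds [simp]: "0 \<le> outcome_mean x a" "outcome_mean x a \<le> 1"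
  by (auto simp: outcome_mean_def)

lemma outcome_prob_bounds [simp]: "0 \<le> outcome_prob x a y" "outcome_prob x a y \<le> 1"
  by (auto simp: outcome_prob_def)

lemma propensity_measurable [measurable]: "(\<lambda>x. propensity x a) \<in> borel_measurable M"
  unfolding propensity_def by measurable

lemma outcome_mean_measurable [measurable]: "(\<lambda>x. outcome_mean x a) \<in> borel_measurable M"
  unfolding outcome_mean_def by measurable

lemma outcome_prob_measurable [measurable]: "(\<lambda>x. outcome_prob x a y) \<in> borel_measurable M"
  unfolding outcome_prob_def by measurable

lemma outcome_mean_policy_measurable:
  assumes [measurable]: "\<pi> \<in> M \<rightarrow>\<^sub>M count_space UNIV"
  shows "(\<lambda>x. outcome_mean x (\<pi> x)) \<in> borel_measurable M"
proof -
  have "(\<lambda>x. outcome_mean x (\<pi> x)) = (\<lambda>x. if \<pi> x then outcome_mean x True else outcome_mean x False)"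
    by (simp add: fun_eq_iff)
  then show ?thesis
    by simp
qed

lemma AE_propensity_pos: "AE w in P. 0 < propensity (oX w) a"
  using overlap by eventually_elim (auto simp: propensity_def clip01_eq)

lemma AE_cond_exp_treatment:
  "AE w in P. real_cond_exp P (vimage_algebra (space P) oX M) (\<lambda>w. of_bool (oA w = a)) w
     = propensity (oX w) a"
proof -
  interpret finite_measure_subalgebra P "vimage_algebra (space P) oX M"
    by (rule finite_measure_subalgebra_vimage_algebra) (auto intro: P.finite_measure_axioms)
  have "AE w in P. real_cond_exp P (vimage_algebra (space P) oX M) (\<lambda>w. of_bool (oA w)) w
      = propensity (oX w) True"
    using e_version overlap by eventually_elim (simp add: propensity_def clip01_eq)
  from real_cond_exp_of_bool_eq[OF _ this, of a] show ?thesis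
    by (cases a) (simp_all add: propensity_def)
qed

lemma integral_treatment:
  assumes [measurable]: "h \<in> borel_measurable M" and h_bound: "\<And>x. \<bar>h x\<bar> \<le> c"
  shows "(\<integral>w. h (oX w) * of_bool (oA w = a) \<partial>P) = (\<integral>w. h (oX w) * propensity (oX w) a \<partial>P)"
  using AE_cond_exp_treatment
  by (intro integral_mult_real_cond_exp_vimage[OF P.finite_measure_axioms _ _ _ _ h_bound])
     (auto intro!: P.integrable_real_bounded[where c=1])

lemma AE_mu_observed_bounds: "AE w in P. 0 \<le> \<mu> (oX w) (oA w) \<and> \<mu> (oX w) (oA w) \<le> 1"
proof -
  let ?G = "vimage_algebra (space P) (\<lambda>w. (oX w, oA w)) (M \<Otimes>\<^sub>M count_space UNIV)"
  interpret finite_measure_subalgebra P ?G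
    by (rule finite_measure_subalgebra_vimage_algebra) (auto intro: P.finite_measure_axioms)
  have int: "integrable P (\<lambda>w. of_bool (oY w) :: real)"
    by (rule P.integrable_real_bounded[where c=1]) auto
  have "AE w in P. 0 \<le> real_cond_exp P ?G (\<lambda>w. of_bool (oY w)) w"
    using int by (intro real_cond_exp_ge_c) auto
  moreover have "AE w in P. real_cond_exp P ?G (\<lambda>w. of_bool (oY w)) w \<le> 1"
    using int by (intro real_cond_exp_le_c) auto
  ultimately show ?thesis
    using mu_version by eventually_elim auto
qed

text \<open>Overlap transfers the bounds from the observed arm \<open>A\<close> to both arms.\<close>

lemma AE_mu_bounds: "AE w in P. 0 \<le> \<mu> (oX w) a \<and> \<mu> (oX w) a \<le> 1"
proof -
  define B where "B = {x \<in> space M. \<not> (0 \<le> \<mu> x a \<and> \<mu> x a \<le> 1)}"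
  have [measurable]: "B \<in> sets M"
    unfolding B_def by measurable
  have "AE w in P. indicator B (oX w) * of_bool (oA w = a) = (0::real)"
    using AE_mu_observed_bounds
  proof eventually_elim
    case (elim w)
    then show ?case
      by (cases "oA w = a") (auto simp: B_def indicator_def)
  qed
  then have "(\<integral>w. indicator B (oX w) * of_bool (oA w = a) \<partial>P) = (0::real)"
    by (rule integral_eq_zero_AE)
  then have "(\<integral>w. indicator B (oX w) * propensity (oX w) a \<partial>P) = 0"
    using integral_treatment[of "indicator B" 1 a] by simp
  moreover have "integrable P (\<lambda>w. indicator B (oX w) * propensity (oX w) a)"
    by (rule P.integrable_real_bounded[where c=1]) (auto split: split_indicator)
  ultimately have "AE w in P. indicator B (oX w) * propensity (oX w) a = 0"
    by (subst (asm) integral_nonneg_eq_0_iff_AE) auto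
  then show ?thesis
    using AE_propensity_pos[of a] AE_space
  proof eventually_elim
    case (elim w)
    then have "oX w \<in> space M"
      using measurable_space[OF oX_measurable_P] by blast
    with elim(1,2) show ?case
      by (auto simp: B_def indicator_def)
  qed
qed

lemma AE_mu_eq_outcome_mean: "AE w in P. \<forall>a. \<mu> (oX w) a = outcome_mean (oX w) a"
  using AE_mu_bounds[of True] AE_mu_bounds[of False]
  by eventually_elim (metis (full_types) clip01_eq outcome_mean_def)

lemma AE_cond_exp_outcome:
  "AE w in P. real_cond_exp P (vimage_algebra (space P) (\<lambda>w. (oX w, oA w)) (M \<Otimes>\<^sub>M count_space UNIV))
     (\<lambda>w. of_bool (oY w = y)) w = outcome_prob (oX w) (oA w) y"
proof -
  let ?G = "vimage_algebra (space P) (\<lambda>w. (oX w, oA w)) (M \<Otimes>\<^sub>M count_space UNIV)"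
  interpret finite_measure_subalgebra P ?G
    by (rule finite_measure_subalgebra_vimage_algebra) (auto intro: P.finite_measure_axioms)
  have "AE w in P. real_cond_exp P ?G (\<lambda>w. of_bool (oY w)) w = outcome_prob (oX w) (oA w) True"
    using mu_version AE_mu_eq_outcome_mean by eventually_elim (simp add: outcome_prob_def)
  from real_cond_exp_of_bool_eq[OF _ this, of y] show ?thesis
    by (cases y) (simp_all add: outcome_prob_def)
qed

lemma integral_obs_cell:
  assumes [measurable]: "h \<in> borel_measurable M" and h_bound: "\<And>x. \<bar>h x\<bar> \<le> c"
  shows "(\<integral>w. h (oX w) * (of_bool (oA w = a) * of_bool (oY w = y)) \<partial>P)
       = (\<integral>w. h (oX w) * (outcome_prob (oX w) a y * propensity (oX w) a) \<partial>P)"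
proof -
  have "(\<integral>w. h (oX w) * (of_bool (oA w = a) * of_bool (oY w = y)) \<partial>P)
      = (\<integral>w. (\<lambda>(x, a'). h x * of_bool (a' = a)) (oX w, oA w) * of_bool (oY w = y) \<partial>P)"
    by (simp add: ac_simps)
  also have "\<dots> = (\<integral>w. (\<lambda>(x, a'). h x * of_bool (a' = a)) (oX w, oA w)
                     * (\<lambda>(x, a'). outcome_prob x a' y) (oX w, oA w) \<partial>P)"
    using AE_cond_exp_outcome h_bound order_trans[OF abs_ge_zero h_bound]
    by (intro integral_mult_real_cond_exp_vimage[OF P.finite_measure_axioms, where c=c])
       (auto intro!: P.integrable_real_bounded[where c=1])
  also have "\<dots> = (\<integral>w. (h (oX w) * outcome_prob (oX w) a y) * of_bool (oA w = a) \<partial>P)"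
    by (intro Bochner_Integration.integral_cong refl) (simp add: of_bool_def)
  also have "\<dots> = (\<integral>w. h (oX w) * (outcome_prob (oX w) a y * propensity (oX w) a) \<partial>P)"
    using h_bound by (subst integral_treatment[where c=c]) (auto simp: abs_mult ac_simps
        intro: order_trans[OF mult_right_le_one_le])
  finally show ?thesis .
qed

lemma integral_obs_decompose:
  assumes [measurable]: "f \<in> borel_measurable (M \<Otimes>\<^sub>M count_space UNIV)"
    and f_bound: "\<And>z. \<bar>f z\<bar> \<le> c"
  shows "(\<integral>z. f z \<partial>P) = (\<integral>z. (\<Sum>s\<in>UNIV. f (oX z, s)
            * (outcome_prob (oX z) (fst s) (snd s) * propensity (oX z) (fst s))) \<partial>P)"
proof -
  have [measurable]: "(\<lambda>x. f (x, s)) \<in> borel_measurable M" for s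
    by measurable
  have cell_bound: "\<bar>f (oX z, s) * (of_bool (oA z = fst s) * of_bool (oY z = snd s))\<bar> \<le> c"
    "\<bar>f (oX z, s) * (outcome_prob (oX z) (fst s) (snd s) * propensity (oX z) (fst s))\<bar> \<le> c"
    for z s
    by (intro abs_mult_le_of_unit_interval f_bound mult_nonneg_nonneg mult_le_one; simp)+
  have "(\<integral>z. f z \<partial>P) = (\<integral>z. (\<Sum>s\<in>UNIV. f (oX z, s)
            * (of_bool (oA z = fst s) * of_bool (oY z = snd s))) \<partial>P)"
  proof (intro Bochner_Integration.integral_cong refl)
    fix z :: "'x obs"
    have "f z = (\<Sum>s\<in>UNIV. if s = (oA z, oY z) then f (oX z, s) else 0)"
      by (simp add: oX_def oA_def oY_def)
    also have "\<dots> = (\<Sum>s\<in>UNIV. f (oX z, s) * (of_bool (oA z = fst s) * of_bool (oY z = snd s)))"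
      by (intro sum.cong refl) auto
    finally show "f z = \<dots>" .
  qed
  also have "\<dots> = (\<Sum>s\<in>UNIV. \<integral>z. f (oX z, s) * (of_bool (oA z = fst s) * of_bool (oY z = snd s)) \<partial>P)"
    by (intro Bochner_Integration.integral_sum P.integrable_real_bounded[where c=c] cell_bound) measurable
  also have "\<dots> = (\<Sum>s\<in>UNIV. \<integral>z. f (oX z, s)
            * (outcome_prob (oX z) (fst s) (snd s) * propensity (oX z) (fst s)) \<partial>P)"
    using f_bound by (intro sum.cong refl integral_obs_cell) auto
  also have "\<dots> = (\<integral>z. (\<Sum>s\<in>UNIV. f (oX z, s)
            * (outcome_prob (oX z) (fst s) (snd s) * propensity (oX z) (fst s))) \<partial>P)"
    by (intro Bochner_Integration.integral_sum[symmetric] P.integrable_real_bounded[where c=c] cell_bound)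
      measurable
  finally show ?thesis .
qed

definition fna_lower :: "('x \<Rightarrow> bool) \<Rightarrow> ('x \<Rightarrow> bool) \<Rightarrow> 'x \<Rightarrow> real" where
  "fna_lower \<pi>0 \<pi>1 x =
     (if \<pi>0 x = \<pi>1 x then 0 else max (outcome_mean x (\<pi>0 x) - outcome_mean x (\<pi>1 x)) 0)"

definition fna_upper :: "('x \<Rightarrow> bool) \<Rightarrow> ('x \<Rightarrow> bool) \<Rightarrow> 'x \<Rightarrow> real" where
  "fna_upper \<pi>0 \<pi>1 x =
     (if \<pi>0 x = \<pi>1 x then 0 else min (outcome_mean x (\<pi>0 x)) (1 - outcome_mean x (\<pi>1 x)))"

lemma fna_bounds_measurable [measurable]:
  assumes [measurable]: "\<pi>0 \<in> M \<rightarrow>\<^sub>M count_space UNIV" "\<pi>1 \<in> M \<rightarrow>\<^sub>M count_space UNIV"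
  shows "fna_lower \<pi>0 \<pi>1 \<in> borel_measurable M" "fna_upper \<pi>0 \<pi>1 \<in> borel_measurable M"
proof -
  have [measurable]: "Measurable.pred M (\<lambda>x. \<pi>0 x = \<pi>1 x)"
    by measurable
  have [measurable]: "(\<lambda>x. outcome_mean x (\<pi>0 x)) \<in> borel_measurable M"
    "(\<lambda>x. outcome_mean x (\<pi>1 x)) \<in> borel_measurable M"
    by (simp_all add: outcome_mean_policy_measurable)
  show "fna_lower \<pi>0 \<pi>1 \<in> borel_measurable M"
    unfolding fna_lower_def[abs_def] by measurable
  show "fna_upper \<pi>0 \<pi>1 \<in> borel_measurable M"
    unfolding fna_upper_def[abs_def] by measurable
qed

lemma fna_bounds_abs_le: "\<bar>fna_lower \<pi>0 \<pi>1 x\<bar> \<le> 1" "\<bar>fna_upper \<pi>0 \<pi>1 x\<bar> \<le> 1"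
  using outcome_mean_bounds[of x True] outcome_mean_bounds[of x False]
  by (auto simp: fna_lower_def fna_upper_def abs_le_iff simp del: outcome_mean_bounds)

end

section \<open>Bounds valid for every compatible full law\<close>

locale compatible_law = obs_model M P e \<mu>
  for M :: "'x measure" and P e \<mu> +
  fixes F :: "'x full measure"
  assumes F_prob: "prob_space F"
    and F_sets: "sets F = sets (full_space M)"
    and F_distr: "distr F (obs_space M) coarsen = P"
    and F_unc: "unconfounded M F"
begin

sublocale F: prob_space F by (rule F_prob)

lemma measurable_F: "measurable F = measurable (M \<Otimes>\<^sub>M count_space UNIV)"
  by (intro ext measurable_cong_sets) (simp_all add: F_sets full_space_eq)

lemmas fX_measurable_F [measurable] = fX_measurable[of M "count_space UNIV", folded measurable_F]
lemmas fA_measurable_F [measurable] = fA_measurable[where M=M, folded measurable_F]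
lemmas pot_measurable_F [measurable] = pot_measurable[where M=M, folded measurable_F]
lemmas pot_policy_measurable_F [measurable] = pot_policy_measurable[where M=M, folded measurable_F]

lemma integral_coarsen:
  assumes "h \<in> borel_measurable (M \<Otimes>\<^sub>M count_space UNIV)"
  shows "(\<integral>z. h z \<partial>P) = (\<integral>w. (h (coarsen w) :: real) \<partial>F)"
  unfolding F_distr[symmetric] using assms coarsen_measurable
  by (intro integral_distr) (simp_all add: obs_space_eq measurable_F)

lemma AE_coarsen:
  assumes "AE w in P. Q (oX w)" and [measurable]: "Measurable.pred M Q"
  shows "AE w in F. Q (fX w)"
proof -
  have "AE z in distr F (obs_space M) coarsen. Q (oX z)"
    unfolding F_distr by (rule assms(1))
  then show ?thesis
    using coarsen_measurable by (subst (asm) AE_distr_iff) (simp_all add: obs_space_eq measurable_F)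
qed

lemma AE_propensity_pos_F: "AE w in F. 0 < propensity (fX w) a"
  using AE_propensity_pos by (rule AE_coarsen) simp

lemma AE_cond_exp_treatment_F:
  "AE w in F. real_cond_exp F (vimage_algebra (space F) fX M) (\<lambda>w. of_bool (fA w = a)) w
     = propensity (fX w) a"
proof (rule real_cond_exp_vimage_eqI[OF F.finite_measure_axioms])
  fix C assume [measurable]: "C \<in> sets M"
  have "(\<integral>w. indicator C (fX w) * of_bool (fA w = a) \<partial>F)
      = (\<integral>z. indicator C (oX z) * of_bool (oA z = a) \<partial>P :: real)"
    by (simp add: integral_coarsen)
  also have "\<dots> = (\<integral>z. indicator C (oX z) * propensity (oX z) a \<partial>P)"
    by (rule integral_treatment[where c=1]) auto
  also have "\<dots> = (\<integral>w. indicator C (fX w) * propensity (fX w) a \<partial>F)"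
    by (simp add: integral_coarsen)
  finally show "(\<integral>w. indicator C (fX w) * of_bool (fA w = a) \<partial>F)
      = (\<integral>w. indicator C (fX w) * propensity (fX w) a \<partial>F)" .
qed (auto intro!: F.integrable_real_bounded[where c=1])

lemma AE_cond_exp_treatment_given_potential:
  "AE w in F. real_cond_exp F (vimage_algebra (space F) (\<lambda>w. (fX w, pot w b)) (M \<Otimes>\<^sub>M count_space UNIV))
     (\<lambda>w. of_bool (fA w = a)) w = propensity (fX w) a"
proof -
  interpret finite_measure_subalgebra F
    "vimage_algebra (space F) (\<lambda>w. (fX w, pot w b)) (M \<Otimes>\<^sub>M count_space UNIV)"
    by (rule finite_measure_subalgebra_vimage_algebra) (auto intro: F.finite_measure_axioms)
  have "AE w in F. real_cond_exp F (vimage_algebra (space F) (\<lambda>w. (fX w, pot w b)) (M \<Otimes>\<^sub>M count_space UNIV))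
     (\<lambda>w. of_bool (fA w)) w = propensity (fX w) True"
    using F_unc AE_cond_exp_treatment_F[of True] unfolding unconfounded_def
    by (auto elim!: allE[of _ b] elim: eventually_elim2)
  from real_cond_exp_of_bool_eq[OF _ this, of a] show ?thesis
    by (cases a) (simp_all add: propensity_def)
qed

lemma integral_potential_treatment:
  assumes [measurable]: "g \<in> borel_measurable (M \<Otimes>\<^sub>M count_space UNIV)" and g_bound: "\<And>z. \<bar>g z\<bar> \<le> c"
  shows "(\<integral>w. g (fX w, pot w b) * of_bool (fA w = a) \<partial>F)
       = (\<integral>w. g (fX w, pot w b) * propensity (fX w) a \<partial>F)"
proof -
  have "(\<integral>w. g (fX w, pot w b) * of_bool (fA w = a) \<partial>F)
      = (\<integral>w. g (fX w, pot w b) * (\<lambda>(x, _). propensity x a) (fX w, pot w b) \<partial>F)"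
    using AE_cond_exp_treatment_given_potential g_bound
    by (intro integral_mult_real_cond_exp_vimage[OF F.finite_measure_axioms, where \<phi>="\<lambda>w. (fX w, pot w b)"
          and g=g]) (auto intro!: F.integrable_real_bounded[where c=1])
  then show ?thesis
    by simp
qed

text \<open>On \<open>{A = a}\<close> the potential outcome \<open>Y(a)\<close> is observed, so weighting by the propensity
  identifies its regression on \<open>X\<close>.\<close>

lemma integral_propensity_potential:
  assumes [measurable]: "h \<in> borel_measurable M" and h_bound: "\<And>x. \<bar>h x\<bar> \<le> c"
  shows "(\<integral>w. h (fX w) * (propensity (fX w) a * of_bool (pot w a)) \<partial>F)
       = (\<integral>w. h (fX w) * (propensity (fX w) a * outcome_mean (fX w) a) \<partial>F)"
proof -
  have c: "0 \<le> c"
    using order_trans[OF abs_ge_zero h_bound] .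
  have "(\<integral>w. h (fX w) * (propensity (fX w) a * of_bool (pot w a)) \<partial>F)
      = (\<integral>w. (\<lambda>(x, y). h x * of_bool y) (fX w, pot w a) * propensity (fX w) a \<partial>F)"
    by (simp add: ac_simps)
  also have "\<dots> = (\<integral>w. (\<lambda>(x, y). h x * of_bool y) (fX w, pot w a) * of_bool (fA w = a) \<partial>F)"
    using h_bound c by (intro integral_potential_treatment[symmetric, where c=c]) (auto simp: abs_mult)
  also have "\<dots> = (\<integral>w. h (fX w) * (of_bool (fA w = a) * of_bool (pot w (fA w) = True)) \<partial>F)"
  proof (intro Bochner_Integration.integral_cong refl)
    fix w
    show "(\<lambda>(x, y). h x * of_bool y) (fX w, pot w a) * of_bool (fA w = a)
        = h (fX w) * (of_bool (fA w = a) * of_bool (pot w (fA w) = True))"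
      by (cases "fA w = a") auto
  qed
  also have "\<dots> = (\<integral>z. h (oX z) * (of_bool (oA z = a) * of_bool (oY z = True)) \<partial>P)"
    by (simp add: integral_coarsen)
  also have "\<dots> = (\<integral>z. h (oX z) * (outcome_prob (oX z) a True * propensity (oX z) a) \<partial>P)"
    by (rule integral_obs_cell[OF _ h_bound]) simp
  also have "\<dots> = (\<integral>w. h (fX w) * (propensity (fX w) a * outcome_mean (fX w) a) \<partial>F)"
    by (simp add: integral_coarsen outcome_prob_def ac_simps)
  finally show ?thesis .
qed

lemma AE_cond_exp_potential:
  "AE w in F. real_cond_exp F (vimage_algebra (space F) fX M) (\<lambda>w. of_bool (pot w a)) w
     = outcome_mean (fX w) a"
proof -
  let ?G = "vimage_algebra (space F) fX M"
  interpret finite_measure_subalgebra F ?G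
    by (rule finite_measure_subalgebra_vimage_algebra) (auto intro: F.finite_measure_axioms)
  have "AE w in F. real_cond_exp F ?G (\<lambda>w. propensity (fX w) a * of_bool (pot w a)) w
      = propensity (fX w) a * real_cond_exp F ?G (\<lambda>w. of_bool (pot w a)) w"
    by (intro real_cond_exp_mult measurable_vimage_algebra_compose[of _ F M]
        F.integrable_real_bounded[where c=1]) auto
  moreover have "AE w in F. real_cond_exp F ?G (\<lambda>w. propensity (fX w) a * of_bool (pot w a)) w
      = propensity (fX w) a * outcome_mean (fX w) a"
    by (rule real_cond_exp_vimage_eqI[OF F.finite_measure_axioms, where h="\<lambda>x. propensity x a * outcome_mean x a"])
       (auto intro!: F.integrable_real_bounded[where c=1] integral_propensity_potential[where c=1] mult_le_one)
  ultimately show ?thesis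
    using AE_propensity_pos_F[of a] by eventually_elim simp
qed

lemma integral_potential:
  assumes [measurable]: "g \<in> borel_measurable M" and g_bound: "\<And>x. \<bar>g x\<bar> \<le> c"
  shows "(\<integral>w. g (fX w) * of_bool (pot w a) \<partial>F) = (\<integral>w. g (fX w) * outcome_mean (fX w) a \<partial>F)"
  using AE_cond_exp_potential g_bound
  by (intro integral_mult_real_cond_exp_vimage[OF F.finite_measure_axioms])
     (auto intro!: F.integrable_real_bounded[where c=1])

lemma integral_affine_potential:
  assumes [measurable]: "h \<in> borel_measurable M" "g0 \<in> borel_measurable M" "g1 \<in> borel_measurable M"
    and bound: "\<And>x. \<bar>h x\<bar> \<le> c" "\<And>x. \<bar>g0 x\<bar> \<le> c" "\<And>x. \<bar>g1 x\<bar> \<le> c"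
  shows "(\<integral>w. h (fX w) + g0 (fX w) * of_bool (pot w False) + g1 (fX w) * of_bool (pot w True) \<partial>F)
       = (\<integral>z. h (oX z) + g0 (oX z) * outcome_mean (oX z) False + g1 (oX z) * outcome_mean (oX z) True \<partial>P)"
proof -
  have int: "integrable F (\<lambda>w. h (fX w))"
    "integrable F (\<lambda>w. g0 (fX w) * of_bool (pot w False))" "integrable F (\<lambda>w. g1 (fX w) * of_bool (pot w True))"
    "integrable F (\<lambda>w. g0 (fX w) * outcome_mean (fX w) False)"
    "integrable F (\<lambda>w. g1 (fX w) * outcome_mean (fX w) True)"
    using bound by (auto intro!: F.integrable_real_bounded[where c=c] abs_mult_le_of_unit_interval)
  have "(\<integral>w. h (fX w) + g0 (fX w) * of_bool (pot w False) + g1 (fX w) * of_bool (pot w True) \<partial>F)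
      = (\<integral>w. h (fX w) \<partial>F) + (\<integral>w. g0 (fX w) * of_bool (pot w False) \<partial>F)
        + (\<integral>w. g1 (fX w) * of_bool (pot w True) \<partial>F)"
    using int by simp
  also have "\<dots> = (\<integral>w. h (fX w) \<partial>F) + (\<integral>w. g0 (fX w) * outcome_mean (fX w) False \<partial>F)
        + (\<integral>w. g1 (fX w) * outcome_mean (fX w) True \<partial>F)"
    using integral_potential[where g=g0, OF _ bound(2)] integral_potential[where g=g1, OF _ bound(3)]
    by simp
  also have "\<dots> = (\<integral>w. h (fX w) + g0 (fX w) * outcome_mean (fX w) False + g1 (fX w) * outcome_mean (fX w) True \<partial>F)"
    using int by simp
  also have "\<dots> = (\<integral>z. h (oX z) + g0 (oX z) * outcome_mean (oX z) False + g1 (oX z) * outcome_mean (oX z) True \<partial>P)"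
    by (simp add: integral_coarsen)
  finally show ?thesis .
qed

lemma FNA_eq_integral_F:
  assumes [measurable]: "\<pi>0 \<in> M \<rightarrow>\<^sub>M count_space UNIV" "\<pi>1 \<in> M \<rightarrow>\<^sub>M count_space UNIV"
  shows "FNA \<pi>0 \<pi>1 F = (\<integral>w. of_bool (pot w (\<pi>0 (fX w)) \<and> \<not> pot w (\<pi>1 (fX w))) \<partial>F)"
  by (rule FNA_eq_integral[OF F.finite_measure_axioms]) measurable

lemma FNA_lower_bound:
  assumes [measurable]: "\<pi>0 \<in> M \<rightarrow>\<^sub>M count_space UNIV" "\<pi>1 \<in> M \<rightarrow>\<^sub>M count_space UNIV"
  shows "(\<integral>z. fna_lower \<pi>0 \<pi>1 (oX z) \<partial>P) \<le> FNA \<pi>0 \<pi>1 F"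
proof -
  define c :: "'x \<Rightarrow> real" where
    "c x = of_bool (\<pi>0 x \<noteq> \<pi>1 x \<and> outcome_mean x (\<pi>1 x) \<le> outcome_mean x (\<pi>0 x))" for x
  define g where "g a x = c x * (of_bool (\<pi>0 x = a) - of_bool (\<pi>1 x = a))" for a x
  have [measurable]: "g a \<in> borel_measurable M" for a
  proof -
    have [measurable]: "Measurable.pred M (\<lambda>x. \<pi>0 x = a)" "Measurable.pred M (\<lambda>x. \<pi>1 x = a)"
      by simp_all
    have [measurable]: "(\<lambda>x. outcome_mean x (\<pi>0 x)) \<in> borel_measurable M"
    "(\<lambda>x. outcome_mean x (\<pi>1 x)) \<in> borel_measurable M"
    by (simp_all add: outcome_mean_policy_measurable)
    show ?thesis
      unfolding g_def[abs_def] c_def by measurable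
  qed
  have g_bound: "\<bar>g a x\<bar> \<le> 1" for a x
    by (auto simp: g_def c_def)
  have "(\<integral>z. fna_lower \<pi>0 \<pi>1 (oX z) \<partial>P)
      = (\<integral>z. 0 + g False (oX z) * outcome_mean (oX z) False + g True (oX z) * outcome_mean (oX z) True \<partial>P)"
    by (intro Bochner_Integration.integral_cong refl) (auto simp: fna_lower_def g_def c_def max_def)
  also have "\<dots> = (\<integral>w. 0 + g False (fX w) * of_bool (pot w False) + g True (fX w) * of_bool (pot w True) \<partial>F)"
    using g_bound by (intro integral_affine_potential[symmetric, where c=1]) auto
  also have "\<dots> \<le> (\<integral>w. of_bool (pot w (\<pi>0 (fX w)) \<and> \<not> pot w (\<pi>1 (fX w))) \<partial>F)"
  proof (intro integral_mono F.integrable_real_bounded[where c=2])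
    fix w
    show "0 + g False (fX w) * of_bool (pot w False) + g True (fX w) * of_bool (pot w True)
        \<le> of_bool (pot w (\<pi>0 (fX w)) \<and> \<not> pot w (\<pi>1 (fX w)))"
      by (cases "\<pi>0 (fX w)"; cases "\<pi>1 (fX w)") (auto simp: g_def c_def)
    show "\<bar>0 + g False (fX w) * of_bool (pot w False) + g True (fX w) * of_bool (pot w True)\<bar> \<le> 2"
      by (auto simp: g_def c_def)
  qed auto
  also have "\<dots> = FNA \<pi>0 \<pi>1 F"
    by (rule FNA_eq_integral_F[symmetric]) simp_all
  finally show ?thesis .
qed

lemma FNA_upper_bound:
  assumes [measurable]: "\<pi>0 \<in> M \<rightarrow>\<^sub>M count_space UNIV" "\<pi>1 \<in> M \<rightarrow>\<^sub>M count_space UNIV"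
  shows "FNA \<pi>0 \<pi>1 F \<le> (\<integral>z. fna_upper \<pi>0 \<pi>1 (oX z) \<partial>P)"
proof -
  define d :: "'x \<Rightarrow> real" where "d x = of_bool (\<pi>0 x \<noteq> \<pi>1 x)" for x
  define k :: "'x \<Rightarrow> real" where
    "k x = of_bool (outcome_mean x (\<pi>0 x) \<le> 1 - outcome_mean x (\<pi>1 x))" for x
  define h where "h x = d x * (1 - k x)" for x
  define g where "g a x = d x * (k x * of_bool (\<pi>0 x = a) - (1 - k x) * of_bool (\<pi>1 x = a))" for a x
  have [measurable]: "h \<in> borel_measurable M" "g a \<in> borel_measurable M" for a
  proof -
    have [measurable]: "Measurable.pred M (\<lambda>x. \<pi>0 x = a)" "Measurable.pred M (\<lambda>x. \<pi>1 x = a)"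
      by simp_all
    have [measurable]: "(\<lambda>x. outcome_mean x (\<pi>0 x)) \<in> borel_measurable M"
    "(\<lambda>x. outcome_mean x (\<pi>1 x)) \<in> borel_measurable M"
    by (simp_all add: outcome_mean_policy_measurable)
    show "h \<in> borel_measurable M" "g a \<in> borel_measurable M"
      unfolding h_def[abs_def] g_def[abs_def] d_def k_def by measurable
  qed
  have bound: "\<bar>h x\<bar> \<le> 1" "\<bar>g a x\<bar> \<le> 1" for a x
    by (auto simp: h_def g_def d_def k_def)
  have "FNA \<pi>0 \<pi>1 F = (\<integral>w. of_bool (pot w (\<pi>0 (fX w)) \<and> \<not> pot w (\<pi>1 (fX w))) \<partial>F)"
    by (rule FNA_eq_integral_F) simp_all
  also have "\<dots> \<le> (\<integral>w. h (fX w) + g False (fX w) * of_bool (pot w False) + g True (fX w) * of_bool (pot w True) \<partial>F)"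
  proof (intro integral_mono F.integrable_real_bounded[where c=3])
    fix w
    show "of_bool (pot w (\<pi>0 (fX w)) \<and> \<not> pot w (\<pi>1 (fX w)))
        \<le> h (fX w) + g False (fX w) * of_bool (pot w False) + g True (fX w) * of_bool (pot w True)"
      by (cases "\<pi>0 (fX w)"; cases "\<pi>1 (fX w)") (auto simp: h_def g_def d_def k_def)
    show "\<bar>h (fX w) + g False (fX w) * of_bool (pot w False) + g True (fX w) * of_bool (pot w True)\<bar> \<le> 3"
      using bound(1)[of "fX w"] bound(2)[of False "fX w"] bound(2)[of True "fX w"] by (auto simp: abs_le_iff)
  qed auto
  also have "\<dots> = (\<integral>z. h (oX z) + g False (oX z) * outcome_mean (oX z) False + g True (oX z) * outcome_mean (oX z) True \<partial>P)"
    using bound by (intro integral_affine_potential[where c=1]) auto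
  also have "\<dots> = (\<integral>z. fna_upper \<pi>0 \<pi>1 (oX z) \<partial>P)"
    by (intro Bochner_Integration.integral_cong refl) (auto simp: fna_upper_def h_def g_def d_def k_def min_def)
  finally show ?thesis .
qed

end

section \<open>Attaining the bounds\<close>

locale coupling_model = obs_model M P e \<mu>
  for M :: "'x measure" and P e \<mu> +
  fixes l :: real
  assumes l_nonneg: "0 \<le> l" and l_le_1: "l \<le> 1"
begin

definition both_one :: "'x \<Rightarrow> real" where
  "both_one x = (1 - l) * min (outcome_mean x False) (outcome_mean x True)
     + l * max 0 (outcome_mean x False + outcome_mean x True - 1)"

definition coupling_prob :: "'x \<Rightarrow> bool \<Rightarrow> bool \<Rightarrow> real" where
  "coupling_prob x y0 y1 =
     (if y0 then (if y1 then both_one x else outcome_mean x False - both_one x)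
      else (if y1 then outcome_mean x True - both_one x
            else 1 - outcome_mean x False - outcome_mean x True + both_one x))"

definition joint_weight :: "'x \<Rightarrow> bool \<times> bool \<times> bool \<Rightarrow> real" where
  "joint_weight x t = propensity x (fst t) * coupling_prob x (fst (snd t)) (snd (snd t))"

text \<open>The full law draws \<open>X\<close> from its \<open>P\<close>-marginal, then \<open>A\<close> with the propensity and, independently
  of \<open>A\<close>, a pair \<open>(Y(0), Y(1))\<close> with the prescribed marginals whose probability of \<open>Y(0) = Y(1) = 1\<close>
  interpolates between the Fr\'echet bounds \<open>min \<mu>\<^sub>0 \<mu>\<^sub>1\<close> (\<open>l = 0\<close>) and \<open>max 0 (\<mu>\<^sub>0 + \<mu>\<^sub>1 - 1)\<close> (\<open>l = 1\<close>).\<close>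

definition coupling_law :: "'x full measure" where
  "coupling_law = density (distr P M oX \<Otimes>\<^sub>M count_space UNIV) (\<lambda>w. ennreal (joint_weight (fst w) (snd w)))"

lemma both_one_bounds:
  "max 0 (outcome_mean x False + outcome_mean x True - 1) \<le> both_one x"
  "both_one x \<le> min (outcome_mean x False) (outcome_mean x True)"
proof -
  let ?lo = "max 0 (outcome_mean x False + outcome_mean x True - 1)"
  let ?hi = "min (outcome_mean x False) (outcome_mean x True)"
  have "?lo \<le> ?hi"
    using outcome_mean_bounds[of x False] outcome_mean_bounds[of x True] by linarith
  then have "0 \<le> (1 - l) * (?hi - ?lo)" "0 \<le> l * (?hi - ?lo)"
    using l_nonneg l_le_1 by simp_all
  moreover have "both_one x = ?lo + (1 - l) * (?hi - ?lo)" "both_one x = ?hi - l * (?hi - ?lo)"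
    unfolding both_one_def by (simp_all add: algebra_simps)
  ultimately show "?lo \<le> both_one x" "both_one x \<le> ?hi"
    by linarith+
qed

lemma joint_weight_nonneg: "0 \<le> joint_weight x t"
  using both_one_bounds[of x]
  by (auto simp: joint_weight_def coupling_prob_def intro!: mult_nonneg_nonneg)

lemma sum_joint_weight: "(\<Sum>t\<in>UNIV. joint_weight x t) = 1"
  unfolding joint_weight_def sum_UNIV_bool_triple
  by (simp add: coupling_prob_def propensity_def algebra_simps)

lemma joint_weight_measurable [measurable]: "(\<lambda>x. joint_weight x t) \<in> borel_measurable M"
proof -
  have [measurable]: "both_one \<in> borel_measurable M"
    unfolding both_one_def[abs_def] by measurable
  have [measurable]: "(\<lambda>x. coupling_prob x y0 y1) \<in> borel_measurable M" for y0 y1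
    by (cases y0; cases y1; simp only: coupling_prob_def if_True if_False; measurable)
  show ?thesis
    unfolding joint_weight_def by measurable
qed

lemma joint_weight_measurable_pair [measurable]:
  "(\<lambda>w. joint_weight (fst w) (snd w)) \<in> borel_measurable (M \<Otimes>\<^sub>M count_space UNIV)"
  by (rule measurable_compose_countable'[where f="\<lambda>t w. joint_weight (fst w) t" and I=UNIV])
     (simp_all add: measurable_compose[OF measurable_fst])

lemma sets_coupling_law: "sets coupling_law = sets (M \<Otimes>\<^sub>M count_space UNIV)"
  unfolding coupling_law_def by (simp add: sets_pair_measure_cong)

lemma measurable_coupling_law: "measurable coupling_law = measurable (M \<Otimes>\<^sub>M count_space UNIV)"
  by (intro ext measurable_cong_sets) (simp_all add: sets_coupling_law)

lemmas fX_measurable_coupling_law [measurable] = fX_measurable[of M "count_space UNIV", folded measurable_coupling_law]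
lemmas fA_measurable_coupling_law [measurable] = fA_measurable[where M=M, folded measurable_coupling_law]
lemmas pot_measurable_coupling_law [measurable] = pot_measurable[where M=M, folded measurable_coupling_law]

lemma nn_integral_coupling_law:
  assumes "g \<in> borel_measurable (M \<Otimes>\<^sub>M count_space UNIV)"
  shows "(\<integral>\<^sup>+w. g w \<partial>coupling_law)
       = (\<integral>\<^sup>+z. (\<Sum>t\<in>UNIV. ennreal (joint_weight (oX z) t) * g (oX z, t)) \<partial>P)"
proof -
  interpret count: sigma_finite_measure "count_space (UNIV :: (bool \<times> bool \<times> bool) set)"
    by (rule sigma_finite_measure_count_space_finite) simp
  have meas: "measurable (distr P M oX \<Otimes>\<^sub>M count_space UNIV) = measurable (M \<Otimes>\<^sub>M count_space UNIV)"
    by (intro ext measurable_cong_sets sets_pair_measure_cong) simp_all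
  have [measurable]: "g \<in> borel_measurable (distr P M oX \<Otimes>\<^sub>M count_space UNIV)"
    "(\<lambda>w. ennreal (joint_weight (fst w) (snd w))) \<in> borel_measurable (distr P M oX \<Otimes>\<^sub>M count_space UNIV)"
    using assms by (simp_all add: meas)
  have "(\<integral>\<^sup>+w. g w \<partial>coupling_law)
      = (\<integral>\<^sup>+w. ennreal (joint_weight (fst w) (snd w)) * g w \<partial>(distr P M oX \<Otimes>\<^sub>M count_space UNIV))"
    unfolding coupling_law_def by (rule nn_integral_density) measurable
  also have "\<dots> = (\<integral>\<^sup>+x. (\<integral>\<^sup>+t. ennreal (joint_weight x t) * g (x, t) \<partial>count_space UNIV) \<partial>distr P M oX)"
    using count.nn_integral_fst[of "\<lambda>w. ennreal (joint_weight (fst w) (snd w)) * g w" "distr P M oX"]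
    by simp
  also have "\<dots> = (\<integral>\<^sup>+x. (\<Sum>t\<in>UNIV. ennreal (joint_weight x t) * g (x, t)) \<partial>distr P M oX)"
    by (simp add: nn_integral_count_space_finite)
  also have "\<dots> = (\<integral>\<^sup>+z. (\<Sum>t\<in>UNIV. ennreal (joint_weight (oX z) t) * g (oX z, t)) \<partial>P)"
    using assms by (intro nn_integral_distr) simp_all
  finally show ?thesis .
qed

lemma prob_space_coupling_law: "prob_space coupling_law"
proof (rule prob_spaceI)
  have "emeasure coupling_law (space coupling_law) = (\<integral>\<^sup>+w. 1 \<partial>coupling_law)"
    by simp
  also have "\<dots> = (\<integral>\<^sup>+z. (\<Sum>t\<in>UNIV. ennreal (joint_weight (oX z) t) * 1) \<partial>P)"
    by (rule nn_integral_coupling_law) simp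
  also have "\<dots> = (\<integral>\<^sup>+z. ennreal (\<Sum>t\<in>UNIV. joint_weight (oX z) t) \<partial>P)"
    by (simp add: sum_ennreal joint_weight_nonneg)
  also have "\<dots> = 1"
    by (simp add: sum_joint_weight P.emeasure_space_1)
  finally show "emeasure coupling_law (space coupling_law) = 1" .
qed

sublocale coupling: prob_space coupling_law
  by (rule prob_space_coupling_law)

lemma integral_coupling_law:
  fixes g :: "'x full \<Rightarrow> real"
  assumes [measurable]: "g \<in> borel_measurable (M \<Otimes>\<^sub>M count_space UNIV)" and nonneg: "\<And>w. 0 \<le> g w"
  shows "(\<integral>w. g w \<partial>coupling_law) = (\<integral>z. (\<Sum>t\<in>UNIV. joint_weight (oX z) t * g (oX z, t)) \<partial>P)"
proof -
  have sum_nonneg: "0 \<le> (\<Sum>t\<in>UNIV. joint_weight x t * g (x, t))" for x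
    by (intro sum_nonneg mult_nonneg_nonneg joint_weight_nonneg nonneg)
  have "(\<integral>w. g w \<partial>coupling_law) = enn2real (\<integral>\<^sup>+w. ennreal (g w) \<partial>coupling_law)"
    using nonneg by (intro integral_eq_nn_integral) (auto simp: measurable_coupling_law)
  also have "(\<integral>\<^sup>+w. ennreal (g w) \<partial>coupling_law)
      = (\<integral>\<^sup>+z. ennreal (\<Sum>t\<in>UNIV. joint_weight (oX z) t * g (oX z, t)) \<partial>P)"
    using nonneg joint_weight_nonneg
    by (simp add: nn_integral_coupling_law ennreal_mult[symmetric] sum_ennreal)
  also have "enn2real \<dots> = (\<integral>z. (\<Sum>t\<in>UNIV. joint_weight (oX z) t * g (oX z, t)) \<partial>P)"
    using sum_nonneg by (intro integral_eq_nn_integral[symmetric]) auto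
  finally show ?thesis .
qed

lemma sum_joint_weight_coarsen:
  "(\<Sum>t\<in>UNIV. joint_weight x t * f (coarsen (x, t)))
     = (\<Sum>s\<in>UNIV. f (x, s) * (outcome_prob x (fst s) (snd s) * propensity x (fst s)))"
  unfolding sum_UNIV_bool_triple sum_UNIV_bool_pair
  by (simp add: coarsen_def fX_def fA_def pot_def joint_weight_def coupling_prob_def outcome_prob_def
      algebra_simps)

lemma distr_coarsen_coupling_law: "distr coupling_law (obs_space M) coarsen = P"
proof (rule measure_eqI)
  show "sets (distr coupling_law (obs_space M) coarsen) = sets P"
    by (simp add: P_sets)
  fix C assume "C \<in> sets (distr coupling_law (obs_space M) coarsen)"
  then have [measurable]: "C \<in> sets (M \<Otimes>\<^sub>M count_space UNIV)"
    by (simp add: obs_space_eq)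
  have coarsen_meas: "coarsen \<in> coupling_law \<rightarrow>\<^sub>M obs_space M"
    using coarsen_measurable by (simp add: measurable_coupling_law obs_space_eq)
  have "measure coupling_law (coarsen -` C \<inter> space coupling_law)
      = (\<integral>w. indicator (coarsen -` C \<inter> space coupling_law) w \<partial>coupling_law)"
    using measurable_sets[OF coarsen_meas, of C] by (simp add: obs_space_eq)
  also have "\<dots> = (\<integral>w. indicator C (coarsen w) \<partial>coupling_law)"
    by (intro Bochner_Integration.integral_cong) (auto split: split_indicator)
  also have "\<dots> = (\<integral>z. (\<Sum>t\<in>UNIV. joint_weight (oX z) t * indicator C (coarsen (oX z, t))) \<partial>P)"
    by (intro integral_coupling_law) auto
  also have "\<dots> = (\<integral>z. (\<Sum>s\<in>UNIV. indicator C (oX z, s)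
                       * (outcome_prob (oX z) (fst s) (snd s) * propensity (oX z) (fst s))) \<partial>P)"
    by (simp only: sum_joint_weight_coarsen)
  also have "\<dots> = (\<integral>z. indicator C z \<partial>P)"
    by (rule integral_obs_decompose[symmetric, where c=1]) auto
  also have "\<dots> = measure P C"
    using P_sets by (simp add: obs_space_eq)
  finally show "emeasure (distr coupling_law (obs_space M) coarsen) C = emeasure P C"
    using coarsen_meas
    by (subst emeasure_distr) (simp_all add: obs_space_eq coupling.emeasure_eq_measure P.emeasure_eq_measure)
qed

lemma integral_treatment_coupling_law:
  assumes [measurable]: "C \<in> sets (M \<Otimes>\<^sub>M count_space UNIV)"
  shows "(\<integral>w. indicator C (fX w, pot w b) * of_bool (fA w) \<partial>coupling_law)
       = (\<integral>w. indicator C (fX w, pot w b) * propensity (fX w) True \<partial>coupling_law)"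
proof -
  have "(\<integral>w. indicator C (fX w, pot w b) * of_bool (fA w) \<partial>coupling_law)
      = (\<integral>z. (\<Sum>t\<in>UNIV. joint_weight (oX z) t
             * (indicator C (fX (oX z, t), pot (oX z, t) b) * of_bool (fA (oX z, t)))) \<partial>P)"
    by (intro integral_coupling_law) auto
  also have "\<dots> = (\<integral>z. (\<Sum>t\<in>UNIV. joint_weight (oX z) t
             * (indicator C (fX (oX z, t), pot (oX z, t) b) * propensity (fX (oX z, t)) True)) \<partial>P)"
    unfolding sum_UNIV_bool_triple
    by (cases b) (simp_all add: fX_def fA_def pot_def joint_weight_def propensity_def algebra_simps)
  also have "\<dots> = (\<integral>w. indicator C (fX w, pot w b) * propensity (fX w) True \<partial>coupling_law)"
    by (intro integral_coupling_law[symmetric]) auto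
  finally show ?thesis .
qed

lemma unconfounded_coupling_law: "unconfounded M coupling_law"
  unfolding unconfounded_def
proof
  fix b
  have "AE w in coupling_law. real_cond_exp coupling_law (vimage_algebra (space coupling_law) fX M)
      (\<lambda>w. of_bool (fA w)) w = propensity (fX w) True"
  proof (rule real_cond_exp_vimage_eqI[OF coupling.finite_measure_axioms])
    fix C assume [measurable]: "C \<in> sets M"
    show "(\<integral>w. indicator C (fX w) * of_bool (fA w) \<partial>coupling_law)
        = (\<integral>w. indicator C (fX w) * propensity (fX w) True \<partial>coupling_law)"
      using integral_treatment_coupling_law[of "C \<times> UNIV" b] by (simp add: indicator_def)
  qed (auto intro!: coupling.integrable_real_bounded[where c=1])
  moreover have "AE w in coupling_law. real_cond_exp coupling_law
      (vimage_algebra (space coupling_law) (\<lambda>w. (fX w, pot w b)) (M \<Otimes>\<^sub>M count_space UNIV))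
      (\<lambda>w. of_bool (fA w)) w = (\<lambda>(x, _). propensity x True) (fX w, pot w b)"
  proof (rule real_cond_exp_vimage_eqI[OF coupling.finite_measure_axioms])
    fix C :: "('x \<times> bool) set" assume "C \<in> sets (M \<Otimes>\<^sub>M count_space UNIV)"
    then show "(\<integral>w. indicator C (fX w, pot w b) * of_bool (fA w) \<partial>coupling_law)
        = (\<integral>w. indicator C (fX w, pot w b) * (\<lambda>(x, _). propensity x True) (fX w, pot w b) \<partial>coupling_law)"
      by (simp add: integral_treatment_coupling_law)
  qed (auto intro!: coupling.integrable_real_bounded[where c=1])
  ultimately show "AE w in coupling_law.
      real_cond_exp coupling_law (vimage_algebra (space coupling_law) fX M) (\<lambda>w. of_bool (fA w)) w
    = real_cond_exp coupling_law (vimage_algebra (space coupling_law) (\<lambda>w. (fX w, pot w b))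
        (M \<Otimes>\<^sub>M count_space UNIV)) (\<lambda>w. of_bool (fA w)) w"
    by eventually_elim simp
qed

lemma coupling_prob_one_zero:
  "coupling_prob x True False
     = (1 - l) * max (outcome_mean x False - outcome_mean x True) 0
       + l * min (outcome_mean x False) (1 - outcome_mean x True)"
  "coupling_prob x False True
     = (1 - l) * max (outcome_mean x True - outcome_mean x False) 0
       + l * min (outcome_mean x True) (1 - outcome_mean x False)"
proof -
  have frechet: "a - min a c = max (a - c) 0" "a - max 0 (a + c - 1) = min a (1 - c)" for a c :: real
    by (simp_all add: min_def max_def)
  have "coupling_prob x True False
      = (1 - l) * (outcome_mean x False - min (outcome_mean x False) (outcome_mean x True))
        + l * (outcome_mean x False - max 0 (outcome_mean x False + outcome_mean x True - 1))"
    "coupling_prob x False True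
      = (1 - l) * (outcome_mean x True - min (outcome_mean x True) (outcome_mean x False))
        + l * (outcome_mean x True - max 0 (outcome_mean x True + outcome_mean x False - 1))"
    by (simp_all add: coupling_prob_def both_one_def algebra_simps min.commute)
  then show "coupling_prob x True False = (1 - l) * max (outcome_mean x False - outcome_mean x True) 0
       + l * min (outcome_mean x False) (1 - outcome_mean x True)"
    "coupling_prob x False True = (1 - l) * max (outcome_mean x True - outcome_mean x False) 0
       + l * min (outcome_mean x True) (1 - outcome_mean x False)"
    by (simp_all only: frechet)
qed

lemma sum_joint_weight_FNA:
  "(\<Sum>t\<in>UNIV. joint_weight x t * of_bool (pot (x, t) (\<pi>0 x) \<and> \<not> pot (x, t) (\<pi>1 x)))
     = (1 - l) * fna_lower \<pi>0 \<pi>1 x + l * fna_upper \<pi>0 \<pi>1 x"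
proof -
  have "(\<Sum>t\<in>UNIV. joint_weight x t * of_bool (pot (x, t) (\<pi>0 x) \<and> \<not> pot (x, t) (\<pi>1 x)))
      = (if \<pi>0 x = \<pi>1 x then 0 else coupling_prob x (\<not> \<pi>0 x) (\<pi>0 x))"
    unfolding sum_UNIV_bool_triple
    by (cases "\<pi>0 x"; cases "\<pi>1 x") (simp_all add: pot_def joint_weight_def propensity_def algebra_simps)
  then show ?thesis
    by (cases "\<pi>0 x"; cases "\<pi>1 x") (simp_all add: coupling_prob_one_zero fna_lower_def fna_upper_def)
qed

lemma FNA_coupling_law:
  assumes [measurable]: "\<pi>0 \<in> M \<rightarrow>\<^sub>M count_space UNIV" "\<pi>1 \<in> M \<rightarrow>\<^sub>M count_space UNIV"
  shows "FNA \<pi>0 \<pi>1 coupling_law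
       = (1 - l) * (\<integral>z. fna_lower \<pi>0 \<pi>1 (oX z) \<partial>P) + l * (\<integral>z. fna_upper \<pi>0 \<pi>1 (oX z) \<partial>P)"
proof -
  have [measurable]: "Measurable.pred (M \<Otimes>\<^sub>M count_space UNIV) (\<lambda>w. pot w (\<pi>0 (fX w)) \<and> \<not> pot w (\<pi>1 (fX w)))"
    by measurable
  have "FNA \<pi>0 \<pi>1 coupling_law = (\<integral>w. of_bool (pot w (\<pi>0 (fX w)) \<and> \<not> pot w (\<pi>1 (fX w))) \<partial>coupling_law)"
    by (rule FNA_eq_integral[OF coupling.finite_measure_axioms]) (simp add: measurable_coupling_law)
  also have "\<dots> = (\<integral>z. (\<Sum>t\<in>UNIV. joint_weight (oX z) t
      * of_bool (pot (oX z, t) (\<pi>0 (oX z)) \<and> \<not> pot (oX z, t) (\<pi>1 (oX z)))) \<partial>P)"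
    by (subst integral_coupling_law) (simp_all add: fX_def)
  also have "\<dots> = (\<integral>z. (1 - l) * fna_lower \<pi>0 \<pi>1 (oX z) + l * fna_upper \<pi>0 \<pi>1 (oX z) \<partial>P)"
    by (simp only: sum_joint_weight_FNA)
  also have "\<dots> = (1 - l) * (\<integral>z. fna_lower \<pi>0 \<pi>1 (oX z) \<partial>P) + l * (\<integral>z. fna_upper \<pi>0 \<pi>1 (oX z) \<partial>P)"
    using fna_bounds_abs_le by (simp add: P.integrable_real_bounded[where c=1])
  finally show ?thesis .
qed

end

context obs_model
begin

lemma identified_set_FNA:
  assumes [measurable]: "\<pi>0 \<in> M \<rightarrow>\<^sub>M count_space UNIV" "\<pi>1 \<in> M \<rightarrow>\<^sub>M count_space UNIV"
  shows "identified_set M P (FNA \<pi>0 \<pi>1)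
       = {(\<integral>z. fna_lower \<pi>0 \<pi>1 (oX z) \<partial>P) .. (\<integral>z. fna_upper \<pi>0 \<pi>1 (oX z) \<partial>P)}"
proof (intro set_eqI iffI)
  fix t assume "t \<in> identified_set M P (FNA \<pi>0 \<pi>1)"
  then obtain F where t: "t = FNA \<pi>0 \<pi>1 F" and "prob_space F" "sets F = sets (full_space M)"
    "distr F (obs_space M) coarsen = P" "unconfounded M F"
    unfolding identified_set_def by blast
  then interpret compatible_law M P e \<mu> F
    by (intro compatible_law.intro obs_model_axioms compatible_law_axioms.intro)
  show "t \<in> {(\<integral>z. fna_lower \<pi>0 \<pi>1 (oX z) \<partial>P) .. (\<integral>z. fna_upper \<pi>0 \<pi>1 (oX z) \<partial>P)}"
    using FNA_lower_bound FNA_upper_bound t by simp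
next
  fix t assume "t \<in> {(\<integral>z. fna_lower \<pi>0 \<pi>1 (oX z) \<partial>P) .. (\<integral>z. fna_upper \<pi>0 \<pi>1 (oX z) \<partial>P)}"
  then have "t \<in> closed_segment (\<integral>z. fna_lower \<pi>0 \<pi>1 (oX z) \<partial>P) (\<integral>z. fna_upper \<pi>0 \<pi>1 (oX z) \<partial>P)"
    by (subst closed_segment_eq_real_ivl1) auto
  then obtain l where l: "0 \<le> l" "l \<le> 1"
    and t: "t = (1 - l) * (\<integral>z. fna_lower \<pi>0 \<pi>1 (oX z) \<partial>P) + l * (\<integral>z. fna_upper \<pi>0 \<pi>1 (oX z) \<partial>P)"
    by (auto simp: in_segment)
  interpret coupling_model M P e \<mu> l
    using l by (intro coupling_model.intro obs_model_axioms coupling_model_axioms.intro)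
  show "t \<in> identified_set M P (FNA \<pi>0 \<pi>1)"
    unfolding identified_set_def
    using prob_space_coupling_law distr_coarsen_coupling_law unconfounded_coupling_law FNA_coupling_law t
    by (intro CollectI exI[of _ coupling_law]) (simp add: sets_coupling_law full_space_eq)
qed

lemma integral_fna_lower_eq:
  assumes [measurable]: "\<pi>0 \<in> M \<rightarrow>\<^sub>M count_space UNIV" "\<pi>1 \<in> M \<rightarrow>\<^sub>M count_space UNIV"
  shows "(\<integral>z. fna_lower \<pi>0 \<pi>1 (oX z) \<partial>P)
       = (\<integral>w. max ((of_bool (\<pi>0 (oX w)) - of_bool (\<pi>1 (oX w))) * (\<mu> (oX w) True - \<mu> (oX w) False)) 0 \<partial>P)"
  using AE_mu_eq_outcome_mean
  by (intro integral_cong_AE) (auto simp: fna_lower_def elim!: eventually_mono)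

lemma integral_fna_upper_eq:
  assumes [measurable]: "\<pi>0 \<in> M \<rightarrow>\<^sub>M count_space UNIV" "\<pi>1 \<in> M \<rightarrow>\<^sub>M count_space UNIV"
  shows "(\<integral>z. fna_upper \<pi>0 \<pi>1 (oX z) \<partial>P)
       = (\<integral>w. min (of_bool (\<pi>1 (oX w)) * (1 - of_bool (\<pi>0 (oX w))) * \<mu> (oX w) False
                   + of_bool (\<pi>0 (oX w)) * (1 - of_bool (\<pi>1 (oX w))) * (1 - \<mu> (oX w) False))
                  (of_bool (\<pi>1 (oX w)) * (1 - of_bool (\<pi>0 (oX w))) * (1 - \<mu> (oX w) True)
                   + of_bool (\<pi>0 (oX w)) * (1 - of_bool (\<pi>1 (oX w))) * \<mu> (oX w) True) \<partial>P)"
  using AE_mu_eq_outcome_mean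
  by (intro integral_cong_AE) (auto simp: fna_upper_def min.commute elim!: eventually_mono)

lemma integral_fna_bounds_never_to_always:
  "(\<integral>z. fna_lower (\<lambda>_. False) (\<lambda>_. True) (oX z) \<partial>P) = - (\<integral>w. min (\<mu> (oX w) True - \<mu> (oX w) False) 0 \<partial>P)"
  "(\<integral>z. fna_upper (\<lambda>_. False) (\<lambda>_. True) (oX z) \<partial>P) = (\<integral>w. min (\<mu> (oX w) False) (1 - \<mu> (oX w) True) \<partial>P)"
proof -
  have "(\<integral>z. fna_lower (\<lambda>_. False) (\<lambda>_. True) (oX z) \<partial>P) = (\<integral>w. - min (\<mu> (oX w) True - \<mu> (oX w) False) 0 \<partial>P)"
    using AE_mu_eq_outcome_mean
    by (intro integral_cong_AE) (auto simp: fna_lower_def max_def min_def elim!: eventually_mono)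
  then show "(\<integral>z. fna_lower (\<lambda>_. False) (\<lambda>_. True) (oX z) \<partial>P) = - (\<integral>w. min (\<mu> (oX w) True - \<mu> (oX w) False) 0 \<partial>P)"
    by simp
  show "(\<integral>z. fna_upper (\<lambda>_. False) (\<lambda>_. True) (oX z) \<partial>P) = (\<integral>w. min (\<mu> (oX w) False) (1 - \<mu> (oX w) True) \<partial>P)"
    using AE_mu_eq_outcome_mean
    by (intro integral_cong_AE) (auto simp: fna_upper_def elim!: eventually_mono)
qed

end

theorem theorem2:
  fixes M :: "'x measure" and P :: "'x obs measure"
    and e :: "'x \<Rightarrow> real" and \<mu> :: "'x \<Rightarrow> bool \<Rightarrow> real"
    and \<pi>0 \<pi>1 :: "'x \<Rightarrow> bool"
  assumes P_prob: "prob_space P"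
    and P_sets: "sets P = sets (obs_space M)"
    (* e is (a version of) the propensity score P(A = 1 | X) *)
    and e_meas: "e \<in> borel_measurable M"
    and e_version: "AE w in P. real_cond_exp P (vimage_algebra (space P) oX M)
                      (\<lambda>w. of_bool (oA w)) w = e (oX w)"
    (* overlap *)
    and overlap: "AE w in P. 0 < e (oX w) \<and> e (oX w) < 1"
    (* mu is (a version of) the outcome regression E_P[Y | X, A = a] *)
    and mu_meas: "(\<lambda>(x, a). \<mu> x a) \<in> borel_measurable (M \<Otimes>\<^sub>M count_space UNIV)"
    and mu_version: "AE w in P. real_cond_exp P
                      (vimage_algebra (space P) (\<lambda>w. (oX w, oA w)) (M \<Otimes>\<^sub>M count_space UNIV))
                      (\<lambda>w. of_bool (oY w)) w = \<mu> (oX w) (oA w)"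
    and pi0_meas: "\<pi>0 \<in> M \<rightarrow>\<^sub>M count_space UNIV"
    and pi1_meas: "\<pi>1 \<in> M \<rightarrow>\<^sub>M count_space UNIV"
  shows
    "identified_set M P (FNA \<pi>0 \<pi>1) =
       {(\<integral>w. max ((of_bool (\<pi>0 (oX w)) - of_bool (\<pi>1 (oX w)))
                      * (\<mu> (oX w) True - \<mu> (oX w) False)) 0 \<partial>P)
        ..
        (\<integral>w. min (of_bool (\<pi>1 (oX w)) * (1 - of_bool (\<pi>0 (oX w))) * \<mu> (oX w) False
                   + of_bool (\<pi>0 (oX w)) * (1 - of_bool (\<pi>1 (oX w))) * (1 - \<mu> (oX w) False))
                  (of_bool (\<pi>1 (oX w)) * (1 - of_bool (\<pi>0 (oX w))) * (1 - \<mu> (oX w) True)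
                   + of_bool (\<pi>0 (oX w)) * (1 - of_bool (\<pi>1 (oX w))) * \<mu> (oX w) True) \<partial>P)}
     \<and>
     identified_set M P (\<lambda>F. measure F {w \<in> space F. pot w False \<and> \<not> pot w True}) =
       {- (\<integral>w. min (\<mu> (oX w) True - \<mu> (oX w) False) 0 \<partial>P)
        ..
        (\<integral>w. min (\<mu> (oX w) False) (1 - \<mu> (oX w) True) \<partial>P)}"
proof -
  interpret obs_model M P e \<mu>
    using assms by (intro obs_model.intro)
  have never_to_always: "(\<lambda>F. measure F {w \<in> space F. pot w False \<and> \<not> pot w True}) = FNA (\<lambda>_. False) (\<lambda>_. True)"
    by (simp add: FNA_def fun_eq_iff)
  show ?thesis
    unfolding never_to_always
    using identified_set_FNA[OF pi0_meas pi1_meas] identified_set_FNA[of "\<lambda>_. False" "\<lambda>_. True"]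
      integral_fna_lower_eq[OF pi0_meas pi1_meas] integral_fna_upper_eq[OF pi0_meas pi1_meas]
      integral_fna_bounds_never_to_always
    by simp
qed

end
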